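(* Let $n\ge1$, $P\ge0$, and $\mathbf{h}\in\mathbb{R}^n\setminus\{\mathbf{0}\}$. Let $\mathbf{G}=(1+P\|\mathbf{h}\|^2)\mathbf{I}-P\mathbf{h}\mathbf{h}^T$, $f(\mathbf{a})=\mathbf{a}^T\mathbf{G}\mathbf{a}$, and $\psi=\sqrt{1+P\|\mathbf{h}\|^2}$. Define $$\Phi=\bigcup_{j:\,h_j\ne0}\left\{\frac{c}{|h_j|}\;:\;c-\tfrac12\in\mathbb{Z},\ |c|\le\lceil\psi\rceil+\tfrac12\right\},$$ and list its elements in increasing order as $\xi_1<\xi_2<\dots<\xi_m$. For $x\in\mathbb{R}$ let $\mathbf{a}(x)=\lfloor\mathbf{h}x\rceil$ (componentwise nearest integer). Then $$\min_{\mathbf{a}\in\mathbb{Z}^n\setminus\{\mathbf{0}\}}f(\mathbf{a})=\min\Big(\min_{1\le i\le n}G_{ii},\ \min\big\{f(\mathbf{a}(\tfrac{\xi_i+\xi_{i+1}}{2}))\;:\;1\le i<m,\ \mathbf{a}(\tfrac{\xi_i+\xi_{i+1}}{2})\ne\mathbf{0}\big\}\Big).$$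
   Context: $\|\cdot\|$ is the Euclidean norm, $\lceil\cdot\rceil$ the ceiling function, $\mathbf{I}$ the $n\times n$ identity matrix. The values $G_{ii}=f(\mathbf{u}_i)$ correspond to the standard unit vectors $\mathbf{u}_i$. *)

theory Defs
  imports "HOL-Analysis.Analysis"
begin

definition Gmat :: "real \<Rightarrow> real^'n \<Rightarrow> real^'n^'n" where
  "Gmat P h = (\<chi> i j. (1 + P * (norm h)\<^sup>2) * (if i = j then 1 else 0) - P * (h $ i) * (h $ j))"

definition fq :: "real \<Rightarrow> real^'n \<Rightarrow> real^'n \<Rightarrow> real" where
  "fq P h a = a \<bullet> (Gmat P h *v a)"

definition psi :: "real \<Rightarrow> real^'n \<Rightarrow> real" where
  "psi P h = sqrt (1 + P * (norm h)\<^sup>2)"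

definition int_vec :: "real^'n \<Rightarrow> bool" where
  "int_vec a \<longleftrightarrow> (\<forall>i. a $ i \<in> \<int>)"

text \<open>Componentwise nearest integer of h x (ties rounded up, via round).\<close>
definition avec :: "real^'n \<Rightarrow> real \<Rightarrow> real^'n" where
  "avec h x = (\<chi> j. of_int (round (h $ j * x)))"

definition Phi :: "real \<Rightarrow> real^'n \<Rightarrow> real set" where
  "Phi P h = (\<Union>j\<in>{j. h $ j \<noteq> 0}.
      {c / \<bar>h $ j\<bar> | c. c - 1/2 \<in> \<int> \<and> \<bar>c\<bar> \<le> of_int \<lceil>psi P h\<rceil> + 1/2})"

text \<open>Elements of Phi in increasing order, 0-indexed: xi 0 < xi 1 < ... < xi (m-1).\<close>
definition xi :: "real \<Rightarrow> real^'n \<Rightarrow> nat \<Rightarrow> real" where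
  "xi P h i = sorted_list_of_set (Phi P h) ! i"

definition mcard :: "real \<Rightarrow> real^'n \<Rightarrow> nat" where
  "mcard P h = card (Phi P h)"

definition rhs_val :: "real \<Rightarrow> real^'n \<Rightarrow> real" where
  "rhs_val P h = Min ({Gmat P h $ i $ i | i. True} \<union>
      {fq P h (avec h ((xi P h i + xi P h (i+1)) / 2)) | i.
          i + 1 < mcard P h \<and> avec h ((xi P h i + xi P h (i+1)) / 2) \<noteq> 0})"

end

theory Submission imports Defs begin

(* Write Q = 1 + P|h|^2, so that f(a) = Q |a|^2 - P (h.a)^2 and psi = sqrt Q.
   The proof rests on a variational formula for the quadratic form:
     Q (P |a - x h|^2 + x^2) - P f(a) = (Q x - P (h.a))^2   for every real x,
   so P f(a) is the minimum over x of Q (P |a - x h|^2 + x^2), attained at x* = P (h.a)/Q.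
   Hence (for P > 0) any vector b that is componentwise at least as close to x* h as a
   satisfies f(b) <= f(a).
   Lower bound: if P = 0 or f(a) >= Q, a diagonal entry G_jj <= Q already is below f(a).
   Otherwise x*^2 < P, so every |h_j x*| < psi.  The breakpoints Phi are exactly the points
   t at which some h_j t is a half-integer of modulus <= ceil(psi) + 1/2, so on each cell
   between consecutive breakpoints the rounding of h x is constant; x* lies in such a cell,
   and rounding h at the cell midpoint gives a nearest integer vector to x* h.  If this
   vector is zero, a signed unit vector is at least as close instead.
   Upper bound: every candidate value is f of a nonzero integer vector. *)

section \<open>Algebra of the quadratic form\<close>

definition qcoef :: "real \<Rightarrow> real^'n \<Rightarrow> real" where
  "qcoef P h = 1 + P * (norm h)\<^sup>2"

lemma qcoef_ge_1: "P \<ge> 0 \<Longrightarrow> qcoef P h \<ge> 1"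
  by (simp add: qcoef_def)

lemma psi_qcoef: "psi P h = sqrt (qcoef P h)"
  by (simp add: psi_def qcoef_def)

lemma Gmat_mult: "Gmat P h *v a = qcoef P h *\<^sub>R a - (P * (h \<bullet> a)) *\<^sub>R h"
proof -
  have "(Gmat P h *v a) $ i = qcoef P h * a $ i - P * h $ i * (h \<bullet> a)" for i
  proof -
    have "(Gmat P h *v a) $ i
        = (\<Sum>j\<in>UNIV. (if i = j then qcoef P h * a $ j else 0) - P * h $ i * (h $ j * a $ j))"
      unfolding Gmat_def matrix_vector_mult_def vec_lambda_beta
      by (intro sum.cong) (auto simp: qcoef_def algebra_simps)
    also have "\<dots> = qcoef P h * a $ i - P * h $ i * (h \<bullet> a)"
      by (simp add: sum_subtractf inner_vec_def sum_distrib_left)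
    finally show ?thesis .
  qed
  then show ?thesis by (simp add: vec_eq_iff)
qed

lemma fq_closed_form: "fq P h a = qcoef P h * (a \<bullet> a) - P * (h \<bullet> a)\<^sup>2"
  unfolding fq_def Gmat_mult by (simp add: inner_diff_right inner_commute power2_eq_square)

lemma Gmat_diag: "Gmat P h $ j $ j = qcoef P h - P * (h $ j)\<^sup>2"
  by (simp add: Gmat_def qcoef_def power2_eq_square)

lemma fq_unit_vector:
  assumes "\<bar>s\<bar> = 1" shows "fq P h (axis j s) = Gmat P h $ j $ j"
proof -
  have "s * s = 1" using assms by (metis abs_mult_self_eq mult_1)
  then show ?thesis unfolding fq_closed_form Gmat_diag
    by (simp add: inner_axis inner_axis_axis power_mult_distrib power2_eq_square)
qed

lemma fq_variational:
  "qcoef P h * (P * (norm (a - x *\<^sub>R h))\<^sup>2 + x\<^sup>2) - P * fq P h a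
     = (qcoef P h * x - P * (h \<bullet> a))\<^sup>2"
  unfolding fq_closed_form qcoef_def power2_norm_eq_inner
  by (simp add: inner_commute algebra_simps power2_eq_square)

lemma fq_le_line_bound: "P * fq P h a \<le> qcoef P h * (P * (norm (a - x *\<^sub>R h))\<^sup>2 + x\<^sup>2)"
  using fq_variational[of P h a x] zero_le_power2[of "qcoef P h * x - P * (h \<bullet> a)"]
  by linarith

lemma fq_at_optimal_shift:
  assumes "P \<ge> 0" and "x = P * (h \<bullet> a) / qcoef P h"
  shows "P * fq P h a = qcoef P h * (P * (norm (a - x *\<^sub>R h))\<^sup>2 + x\<^sup>2)"
  using fq_variational[of P h a x] qcoef_ge_1[OF assms(1), of h] assms(2) by simp

lemma fq_mono_closer:
  assumes P: "P > 0" and x: "x = P * (h \<bullet> a) / qcoef P h"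
    and closer: "\<And>k. \<bar>b $ k - x * h $ k\<bar> \<le> \<bar>a $ k - x * h $ k\<bar>"
  shows "fq P h b \<le> fq P h a"
proof -
  have "norm (b - x *\<^sub>R h) \<le> norm (a - x *\<^sub>R h)"
    by (rule norm_le_componentwise_cart) (simp add: closer mult.commute)
  then have "(norm (b - x *\<^sub>R h))\<^sup>2 \<le> (norm (a - x *\<^sub>R h))\<^sup>2"
    by (simp add: power_mono)
  have "P * fq P h b \<le> qcoef P h * (P * (norm (b - x *\<^sub>R h))\<^sup>2 + x\<^sup>2)"
    by (rule fq_le_line_bound)
  also have "\<dots> \<le> qcoef P h * (P * (norm (a - x *\<^sub>R h))\<^sup>2 + x\<^sup>2)"
    using \<open>(norm (b - x *\<^sub>R h))\<^sup>2 \<le> (norm (a - x *\<^sub>R h))\<^sup>2\<close> P qcoef_ge_1[of P h]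
    by (intro mult_left_mono add_right_mono) auto
  also have "\<dots> = P * fq P h a"
    using fq_at_optimal_shift[of P x h a] P x by simp
  finally show ?thesis using P by simp
qed

lemma optimal_shift_small:
  assumes P: "P > 0" and x: "x = P * (h \<bullet> a) / qcoef P h" and small: "fq P h a < qcoef P h"
  shows "\<bar>h $ j * x\<bar> < psi P h"
proof -
  have "qcoef P h * x\<^sup>2 \<le> qcoef P h * (P * (norm (a - x *\<^sub>R h))\<^sup>2 + x\<^sup>2)"
    using P qcoef_ge_1[of P h] by (intro mult_left_mono) auto
  also have "\<dots> = P * fq P h a" using fq_at_optimal_shift[of P x h a] P x by simp
  also have "\<dots> < P * qcoef P h" using small P by simp
  finally have x2: "x\<^sup>2 < P" using qcoef_ge_1[of P h] P by (simp add: mult.commute)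
  have "(h $ j)\<^sup>2 \<le> (norm h)\<^sup>2"
    using power_mono[OF component_le_norm_cart abs_ge_zero, of h j 2] by simp
  then have "(h $ j * x)\<^sup>2 \<le> (norm h)\<^sup>2 * x\<^sup>2"
    by (simp add: power_mult_distrib mult_right_mono)
  also have "\<dots> \<le> (norm h)\<^sup>2 * P" using x2 by (simp add: mult_left_mono)
  also have "\<dots> < qcoef P h" unfolding qcoef_def by simp
  finally have "\<bar>h $ j * x\<bar>\<^sup>2 < qcoef P h" by simp
  then show ?thesis unfolding psi_qcoef by (rule real_less_rsqrt)
qed

lemma int_vec_inner_self_ge_1:
  assumes "int_vec a" "a \<noteq> 0" shows "a \<bullet> a \<ge> 1"
proof -
  obtain j where j: "a $ j \<noteq> 0" using assms(2) by (auto simp: vec_eq_iff)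
  have "1 \<le> \<bar>a $ j\<bar>" using Ints_nonzero_abs_ge1 j assms(1) unfolding int_vec_def by blast
  then have "1 \<le> a $ j * a $ j" by (metis abs_mult_self_eq mult_mono abs_ge_zero mult_1_right zero_le_one)
  also have "\<dots> \<le> (\<Sum>k\<in>UNIV. a $ k * a $ k)" by (rule member_le_sum) auto
  finally show ?thesis by (simp add: inner_vec_def)
qed

section \<open>Rounding\<close>

lemma nearest_integer:
  fixes k z y :: real
  assumes "k \<in> \<int>" "z \<in> \<int>" "\<bar>k - y\<bar> \<le> 1/2"
  shows "\<bar>k - y\<bar> \<le> \<bar>z - y\<bar>"
proof (cases "z = k")
  case False
  then have "1 \<le> \<bar>z - k\<bar>" using Ints_nonzero_abs_ge1[of "z - k"] assms(1,2) by simp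
  then show ?thesis using assms(3) by linarith
qed simp

lemma sgn_closer:
  fixes z y :: real
  assumes "z \<in> \<int>" "z \<noteq> 0" "\<bar>y\<bar> \<le> 1/2"
  shows "\<bar>sgn z - y\<bar> \<le> \<bar>z - y\<bar>"
  using Ints_nonzero_abs_ge1[OF assms(1,2)] assms(3) by (auto simp: sgn_if abs_if)

lemma round_close:
  fixes y w :: real
  assumes no_halfint: "\<And>c. c - 1/2 \<in> \<int> \<Longrightarrow> c \<noteq> y \<Longrightarrow> min y w \<le> c \<Longrightarrow> c \<le> max y w \<Longrightarrow> False"
  shows "\<bar>of_int (round w) - y\<bar> \<le> 1/2"
proof (rule ccontr)
  define k where "k = round w"
  have k: "of_int k > w - 1/2" "of_int k \<le> w + 1/2"
    unfolding k_def using of_int_round_gt of_int_round_le by auto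
  assume "\<not> \<bar>of_int (round w) - y\<bar> \<le> 1/2"
  then consider "y < of_int k - 1/2" | "y > of_int k + 1/2" unfolding k_def by linarith
  then show False
  proof cases
    case 1
    then show False using k by (intro no_halfint[of "of_int k - 1/2"]) auto
  next
    case 2
    have "of_int k + 1/2 - 1/2 \<in> \<int>" by simp
    then show False using 2 k by (intro no_halfint[of "of_int k + 1/2"]) auto
  qed
qed

lemma between_unscale:
  fixes s x m t :: real
  assumes "s \<noteq> 0" "min (s * x) (s * m) \<le> s * t" "s * t \<le> max (s * x) (s * m)"
  shows "min x m \<le> t \<and> t \<le> max x m"
  using assms by (cases "s > 0") (auto simp: min_def max_def mult_le_cancel_left split: if_splits)

section \<open>The breakpoint set Phi and its cells\<close>

lemma halfint_finite: "finite {c::real. c - 1/2 \<in> \<int> \<and> \<bar>c\<bar> \<le> B}"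
proof -
  let ?M = "\<lceil>B\<rceil> + 1"
  have "{c::real. c - 1/2 \<in> \<int> \<and> \<bar>c\<bar> \<le> B} \<subseteq> (\<lambda>k. of_int k + 1/2) ` {-?M..?M}"
  proof
    fix c :: real assume "c \<in> {c::real. c - 1/2 \<in> \<int> \<and> \<bar>c\<bar> \<le> B}"
    then obtain k where k: "c - 1/2 = of_int k" and cb: "\<bar>c\<bar> \<le> B" by (auto elim: Ints_cases)
    have "of_int k \<le> B + 1" "of_int k \<ge> - B - 1" using k cb by (auto simp: abs_le_iff)
    then have "k \<le> ?M" "k \<ge> -?M" by linarith+
    then show "c \<in> (\<lambda>k. of_int k + 1/2) ` {-?M..?M}" using k by (intro image_eqI[of _ _ k]) auto
  qed
  then show ?thesis by (rule finite_subset) simp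
qed

lemma Phi_finite: "finite (Phi P h)"
  unfolding Phi_def by (intro finite_UN_I) (simp_all add: Setcompr_eq_image halfint_finite)

lemma sorted_Phi: "sorted (sorted_list_of_set (Phi P h))"
  and set_sorted_Phi: "set (sorted_list_of_set (Phi P h)) = Phi P h"
  and length_sorted_Phi: "length (sorted_list_of_set (Phi P h)) = mcard P h"
  using Phi_finite[of P h] by (auto simp: mcard_def)

lemma halfint_uminus:
  assumes "(c::real) - 1/2 \<in> \<int>" shows "-c - 1/2 \<in> \<int>"
proof -
  have "-c - 1/2 = - (c - 1/2) - 1" by simp
  then show ?thesis using assms by (metis Ints_1 Ints_diff Ints_minus)
qed

lemma Phi_mem:
  assumes "h $ j \<noteq> 0" "c - 1/2 \<in> \<int>" "\<bar>c\<bar> \<le> of_int \<lceil>psi P h\<rceil> + 1/2"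
  shows "c / h $ j \<in> Phi P h"
proof -
  have "c / h $ j = sgn (h $ j) * c / \<bar>h $ j\<bar>" using assms(1) by (simp add: sgn_if)
  moreover have "sgn (h $ j) * c - 1/2 \<in> \<int>"
    using assms(1,2) halfint_uminus[of c] by (simp add: sgn_if)
  ultimately show ?thesis unfolding Phi_def using assms by (auto simp: abs_mult intro!: exI[of _ j])
qed

lemma Phi_outer:
  assumes "P \<ge> 0" "h $ j \<noteq> 0"
  shows "(of_int \<lceil>psi P h\<rceil> + 1/2) / \<bar>h $ j\<bar> \<in> Phi P h"
    and "- ((of_int \<lceil>psi P h\<rceil> + 1/2) / \<bar>h $ j\<bar>) \<in> Phi P h"
proof -
  define B :: real where "B = of_int \<lceil>psi P h\<rceil> + 1/2"
  have "0 \<le> psi P h" using assms(1) by (simp add: psi_def)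
  then have B: "\<bar>B\<bar> \<le> B" "\<bar>-B\<bar> \<le> B" unfolding B_def
    using le_of_int_ceiling[of "psi P h"] by linarith+
  have I: "B - 1/2 \<in> \<int>" unfolding B_def by simp
  show "B / \<bar>h $ j\<bar> \<in> Phi P h"
    unfolding Phi_def B_def[symmetric] using assms(2) B I by blast
  show "- (B / \<bar>h $ j\<bar>) \<in> Phi P h"
    unfolding Phi_def B_def[symmetric] minus_divide_left using assms(2) B halfint_uminus[OF I]
    by blast
qed

lemma sorted_gap:
  assumes "sorted L" "Suc i < length L" "e \<in> set L"
  shows "\<not> (L ! i < e \<and> e < L ! Suc i)"
proof
  assume e: "L ! i < e \<and> e < L ! Suc i"
  from assms(3) obtain k where k: "k < length L" "e = L ! k" by (metis in_set_conv_nth)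
  show False
  proof (cases "k \<le> i")
    case True then show False using sorted_nth_mono[OF assms(1) True] assms k e by auto
  next
    case False
    then have "Suc i \<le> k" by simp
    then show False using sorted_nth_mono[OF assms(1)] k e by fastforce
  qed
qed

lemma sorted_bracket:
  fixes x :: real
  shows "sorted L \<Longrightarrow> u \<in> set L \<Longrightarrow> u \<le> x \<Longrightarrow> v \<in> set L \<Longrightarrow> x < v \<Longrightarrow>
    \<exists>i. Suc i < length L \<and> L ! i \<le> x \<and> x < L ! Suc i"
proof (induction L arbitrary: u)
  case Nil then show ?case by simp
next
  case (Cons y ys)
  have yu: "y \<le> u" using Cons.prems(1,2) by auto
  show ?case
  proof (cases "ys = [] \<or> x < hd ys")
    case True
    then show ?thesis using Cons.prems yu by (cases ys) (auto intro!: exI[of _ 0])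
  next
    case False
    then obtain z zs where ys: "ys = z # zs" and "z \<le> x" by (cases ys) auto
    moreover have "v \<in> set ys" using Cons.prems yu by auto
    ultimately obtain i where "Suc i < length ys" "ys ! i \<le> x" "x < ys ! Suc i"
      using Cons.IH[of z] Cons.prems by auto
    then show ?thesis by (intro exI[of _ "Suc i"]) auto
  qed
qed

lemma sorted_cell_within:
  fixes x :: real
  assumes "sorted L" "Suc i < length L" "L ! i \<le> x" "x < L ! Suc i"
    and "u \<in> set L" "u < x" "v \<in> set L" "x < v"
  shows "u \<le> L ! i \<and> L ! Suc i \<le> v"
  using sorted_gap[OF assms(1,2) assms(5)] sorted_gap[OF assms(1,2) assms(7)] assms(3-8)
  by fastforce

definition midvec :: "real \<Rightarrow> real^'n \<Rightarrow> nat \<Rightarrow> real^'n" where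
  "midvec P h i = avec h ((xi P h i + xi P h (i + 1)) / 2)"

lemma int_vec_avec: "int_vec (avec h x)"
  by (simp add: int_vec_def avec_def)

text \<open>Within a cell no h_j t crosses a relevant half-integer, so rounding h at the midpoint
  gives, in every coordinate, an integer within 1/2 of h_j x for any x of the cell.\<close>
lemma midvec_close:
  assumes P: "P \<ge> 0" and cell: "Suc i < mcard P h" "xi P h i \<le> x" "x < xi P h (Suc i)"
    and bound: "\<bar>h $ j * x\<bar> < of_int \<lceil>psi P h\<rceil> + 1/2"
  shows "\<bar>midvec P h i $ j - h $ j * x\<bar> \<le> 1/2"
proof (cases "h $ j = 0")
  case True then show ?thesis by (simp add: midvec_def avec_def)
next
  case hj: False
  define L where "L = sorted_list_of_set (Phi P h)"
  define B :: real where "B = of_int \<lceil>psi P h\<rceil> + 1/2"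
  define R where "R = B / \<bar>h $ j\<bar>"
  define m where "m = (L ! i + L ! Suc i) / 2"
  have sL: "sorted L" and setL: "set L = Phi P h" and iL: "Suc i < length L"
    using sorted_Phi set_sorted_Phi cell(1) unfolding L_def by (simp_all add: mcard_def)
  have xL: "L ! i \<le> x" "x < L ! Suc i" using cell unfolding L_def xi_def by auto
  have "R \<in> set L" "-R \<in> set L"
    using Phi_outer[OF P hj] setL unfolding R_def B_def by simp_all
  moreover have "\<bar>x\<bar> < R" using bound hj unfolding R_def B_def
    by (simp add: abs_mult pos_less_divide_eq mult.commute)
  ultimately have inside: "-R \<le> L ! i" "L ! Suc i \<le> R"
    using sorted_cell_within[OF sL iL xL] by auto
  have m: "L ! i < m" "m < L ! Suc i" using xL unfolding m_def by auto
  have "\<bar>of_int (round (h $ j * m)) - h $ j * x\<bar> \<le> 1/2"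
  proof (rule round_close)
    fix c assume c: "c - 1/2 \<in> \<int>" "c \<noteq> h $ j * x"
      "min (h $ j * x) (h $ j * m) \<le> c" "c \<le> max (h $ j * x) (h $ j * m)"
    define t where "t = c / h $ j"
    have ht: "h $ j * t = c" unfolding t_def using hj by simp
    have "min x m \<le> t \<and> t \<le> max x m" using between_unscale[OF hj] c(3,4) ht by simp
    moreover have "t \<noteq> x" using c(2) ht by auto
    ultimately have tL: "L ! i < t \<and> t < L ! Suc i" using xL m by auto
    then have "\<bar>t\<bar> \<le> R" using inside by auto
    then have "\<bar>t\<bar> * \<bar>h $ j\<bar> \<le> B" using hj unfolding R_def
      by (simp add: pos_le_divide_eq)
    then have "\<bar>c\<bar> \<le> B" using ht by (metis abs_mult mult.commute)
    then have "t \<in> set L" using Phi_mem[OF hj c(1)] setL unfolding t_def B_def by simp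
    then show False using sorted_gap[OF sL iL] tL by blast
  qed
  then show ?thesis unfolding midvec_def avec_def m_def L_def xi_def by simp
qed

lemma cell_exists:
  assumes P: "P \<ge> 0" and h: "h \<noteq> 0" and bound: "\<And>j. \<bar>h $ j * x\<bar> < of_int \<lceil>psi P h\<rceil> + 1/2"
  shows "\<exists>i. Suc i < mcard P h \<and> xi P h i \<le> x \<and> x < xi P h (Suc i)"
proof -
  obtain j where hj: "h $ j \<noteq> 0" using h by (auto simp: vec_eq_iff)
  define R where "R = (of_int \<lceil>psi P h\<rceil> + 1/2) / \<bar>h $ j\<bar>"
  have "R \<in> Phi P h" "-R \<in> Phi P h"
    using Phi_outer[OF P hj] unfolding R_def by simp_all
  moreover have "\<bar>x\<bar> < R" using bound[of j] hj unfolding R_def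
    by (simp add: abs_mult pos_less_divide_eq mult.commute)
  ultimately show ?thesis
    using sorted_bracket[OF sorted_Phi, of "-R" P h x R]
    unfolding set_sorted_Phi length_sorted_Phi xi_def by auto
qed

section \<open>The candidate values\<close>

definition diag_vals :: "real \<Rightarrow> real^'n \<Rightarrow> real set" where
  "diag_vals P h = {Gmat P h $ i $ i | i. True}"

definition mid_vals :: "real \<Rightarrow> real^'n \<Rightarrow> real set" where
  "mid_vals P h = {fq P h (midvec P h i) | i. i + 1 < mcard P h \<and> midvec P h i \<noteq> 0}"

lemma rhs_val_Min: "rhs_val P h = Min (diag_vals P h \<union> mid_vals P h)"
  unfolding rhs_val_def diag_vals_def mid_vals_def midvec_def ..

lemma candidates_finite: "finite (diag_vals P h \<union> mid_vals P h)"
proof -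
  have "mid_vals P h \<subseteq> (\<lambda>i. fq P h (midvec P h i)) ` {..<mcard P h}"
    unfolding mid_vals_def by auto
  then show ?thesis unfolding diag_vals_def by (simp add: full_SetCompr_eq finite_subset)
qed

lemma candidate_attained:
  assumes "c \<in> diag_vals P h \<union> mid_vals P h"
  shows "\<exists>a. int_vec a \<and> a \<noteq> 0 \<and> fq P h a = c"
  using assms
proof
  assume "c \<in> diag_vals P h"
  then obtain j where "c = Gmat P h $ j $ j" unfolding diag_vals_def by auto
  moreover have "int_vec (axis j (1::real))" by (simp add: int_vec_def axis_def)
  ultimately show ?thesis using fq_unit_vector[of 1 P h j] by (auto simp: axis_eq_0_iff)
next
  assume "c \<in> mid_vals P h"
  then show ?thesis unfolding mid_vals_def midvec_def using int_vec_avec by blast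
qed

lemma candidate_below:
  assumes P: "P \<ge> 0" and h: "h \<noteq> 0" and a: "int_vec a" "a \<noteq> 0"
  shows "\<exists>c \<in> diag_vals P h \<union> mid_vals P h. c \<le> fq P h a"
proof -
  obtain j where aj: "a $ j \<noteq> 0" using a(2) by (auto simp: vec_eq_iff)
  have aI: "a $ k \<in> \<int>" for k using a(1) by (simp add: int_vec_def)
  have diag_j: "Gmat P h $ j $ j \<in> diag_vals P h" by (auto simp: diag_vals_def)
  consider "P = 0" | "fq P h a \<ge> qcoef P h" | "P > 0" "fq P h a < qcoef P h"
    using P by linarith
  then show ?thesis
  proof cases
    case 1
    then show ?thesis using int_vec_inner_self_ge_1[OF a] diag_j
      by (auto simp: Gmat_diag fq_closed_form qcoef_def)
  next
    case 2
    have "Gmat P h $ j $ j \<le> qcoef P h" using P by (simp add: Gmat_diag)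
    then show ?thesis using 2 diag_j by (intro bexI[of _ "Gmat P h $ j $ j"]) auto
  next
    case 3
    define x where "x = P * (h \<bullet> a) / qcoef P h"
    have small: "\<bar>h $ k * x\<bar> < psi P h" for k using optimal_shift_small[OF 3(1) x_def 3(2)] .
    have bound: "\<bar>h $ k * x\<bar> < of_int \<lceil>psi P h\<rceil> + 1/2" for k
      using small[of k] le_of_int_ceiling[of "psi P h"] by linarith
    obtain i where i: "Suc i < mcard P h" "xi P h i \<le> x" "x < xi P h (Suc i)"
      using cell_exists[OF P h bound] by blast
    define b where "b = midvec P h i"
    have b_close: "\<bar>b $ k - h $ k * x\<bar> \<le> 1/2" for k
      unfolding b_def using midvec_close[OF P i bound] .
    show ?thesis
    proof (cases "b = 0")
      case False
      have "b $ k \<in> \<int>" for k using int_vec_avec unfolding b_def midvec_def int_vec_def by blast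
      then have "fq P h b \<le> fq P h a"
        using fq_mono_closer[OF 3(1) x_def] nearest_integer[OF _ aI b_close]
        by (simp add: mult.commute)
      moreover have "fq P h b \<in> mid_vals P h" using False i(1) unfolding b_def mid_vals_def by auto
      ultimately show ?thesis by blast
    next
      case True
      text \<open>All h_k x* are within 1/2 of 0; a signed unit vector is then at least as close as a.\<close>
      then have half: "\<bar>h $ k * x\<bar> \<le> 1/2" for k using b_close[of k] by simp
      define e where "e = axis j (sgn (a $ j))"
      have "\<bar>e $ k - x * h $ k\<bar> \<le> \<bar>a $ k - x * h $ k\<bar>" for k
      proof (cases "k = j")
        case True
        then show ?thesis using sgn_closer[OF aI aj half] by (simp add: e_def mult.commute)
      next
        case False
        then show ?thesis using nearest_integer[OF Ints_0 aI, of "x * h $ k" k] half[of k]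
          by (simp add: e_def axis_def mult.commute)
      qed
      then have "fq P h e \<le> fq P h a" by (rule fq_mono_closer[OF 3(1) x_def])
      moreover have "fq P h e = Gmat P h $ j $ j"
        unfolding e_def using aj by (intro fq_unit_vector) (simp add: sgn_if)
      ultimately show ?thesis using diag_j by auto
    qed
  qed
qed

theorem mainTheorem4:
  fixes P :: real and h :: "real^'n"
  assumes "P \<ge> 0" and "h \<noteq> 0"
  shows "(\<exists>a. int_vec a \<and> a \<noteq> 0 \<and> fq P h a = rhs_val P h)
       \<and> (\<forall>a. int_vec a \<and> a \<noteq> 0 \<longrightarrow> rhs_val P h \<le> fq P h a)"
proof
  let ?C = "diag_vals P h \<union> mid_vals P h"
  have nonempty: "?C \<noteq> {}" by (auto simp: diag_vals_def)
  show "\<exists>a. int_vec a \<and> a \<noteq> 0 \<and> fq P h a = rhs_val P h"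
    using candidate_attained[OF Min_in[OF candidates_finite nonempty]] by (simp add: rhs_val_Min)
  show "\<forall>a. int_vec a \<and> a \<noteq> 0 \<longrightarrow> rhs_val P h \<le> fq P h a"
  proof (intro allI impI)
    fix a :: "real^'n" assume "int_vec a \<and> a \<noteq> 0"
    then obtain c where "c \<in> ?C" "c \<le> fq P h a" using candidate_below[OF assms] by blast
    then show "rhs_val P h \<le> fq P h a"
      unfolding rhs_val_Min using Min_le[OF candidates_finite] by fastforce
  qed
qed

end
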